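(* In the multi-sender privacy game, let $(\alpha^{(i),0})_{i\in\mathbf{N}}\in\prod_iA'_i$ and $\beta^0\in B'$, and generate a random sequence as follows: for $k=1,2,\dots$, select $j\in\{0,1,\dots,n\}$ uniformly at random (independently of the past); if $j=0$, choose $\beta^k\in\arg\min_{\beta\in B'}V((\alpha^{(i),k-1})_{i},\beta)$ and set $\alpha^{(i),k}=\alpha^{(i),k-1}$ for all $i\in\mathbf{N}$; if $j\ge1$, choose $\alpha^{(j),k}\in\arg\min_{\alpha^{(j)}\in A'_j}U_j(\alpha^{(j)},(\alpha^{(i),k-1})_{i\neq j},\beta^{k-1})$, set $\alpha^{(i),k}=\alpha^{(i),k-1}$ for $i\in\mathbf{N}\setminus\{j\}$ and $\beta^k=\beta^{k-1}$. Then for every $\epsilon>0$, $\lim_{k\to\infty}\mathbb{P}\{((\alpha^{(i),k})_{i\in\mathbf{N}},\beta^k)\in\mathcal{N}'_\epsilon\}=1$, where $\mathcal{N}'_\epsilon$ is the set of all $((\alpha^{(i)})_i,\beta)\in\prod_iA'_i\times B'$ such that $U_j((\alpha^{(i)})_i,\beta)\le U_j(\bar\alpha^{(j)},(\alpha^{(i)})_{i\neq j},\beta)+\epsilon$ for all $j\in\mathbf{N}$, $\bar\alpha^{(j)}\in A'_j$, and $V((\alpha^{(i)})_i,\beta)\le V((\alpha^{(i)})_i,\bar\beta)+\epsilon$ for all $\bar\beta\in B'$.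
   Context: Multi-sender privacy game. Let $n\ge 2$, $\mathbf{N}=\{1,\dots,n\}$, and let $\mathcal{X}$, $\mathcal{W}_i$, $\mathcal{Y}_i$ ($i\in\mathbf{N}$) be finite nonempty sets. $(X,(Z_i)_{i\in\mathbf{N}},(W_i)_{i\in\mathbf{N}})$ has joint probability mass function $p$ on $\mathcal{X}\times\mathcal{X}^n\times\prod_i\mathcal{W}_i$. Sender $i$ observes $(Z_i,W_i)$ and sends $Y_i\in\mathcal{Y}_i$ with $\mathbb{P}\{Y_i=y_i\mid Z_i=z_i,W_i=w_i\}=\alpha^{(i)}_{y_iz_iw_i}$, independently across senders given the observations, where $\alpha^{(i)}\in A'_i=\{\alpha^{(i)}:\alpha^{(i)}_{y_iz_iw_i}\in[0,1],\ \sum_{y_i}\alpha^{(i)}_{y_iz_iw_i}=1\ \forall(z_i,w_i)\in\mathcal{X}\times\mathcal{W}_i\}$. The receiver outputs $\hat X\in\mathcal{X}$ with $\mathbb{P}\{\hat X=\hat x\mid (Y_i)_i=(y_i)_i\}=\beta_{\hat x y_1\dots y_n}$, $\beta\in B'=\{\beta:\beta_{\hat x y_1\dots y_n}\in[0,1],\ \sum_{\hat x}\beta_{\hat x y_1\dots y_n}=1\ \forall (y_i)_i\}$. Let $d:\mathcal{X}\times\mathcal{X}\to\mathbb{R}_{\ge0}$ and $\varrho\in\mathbb{R}$. Define $\xi'(\beta,(\alpha^{(i)})_i)=\sum_{(y_1,z_1,w_1)}\cdots\sum_{(y_n,z_n,w_n)}\sum_{\hat x,x\in\mathcal{X}}d(x,\hat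 x)\beta_{\hat x y_1\dots y_n}\prod_{i\in\mathbf{N}}\alpha^{(i)}_{y_iz_iw_i}\,p(x,(z_i)_i,(w_i)_i)$, each $(y_i,z_i,w_i)$ ranging over $\mathcal{Y}_i\times\mathcal{X}\times\mathcal{W}_i$ (this is $\mathbb{E}\{d(X,\hat X)\}$). Define $\zeta'_j(\alpha^{(j)})=I(Y_j;W_j)=\sum_{y,w}P^j_{yw}\log\frac{P^j_{yw}}{P^j_yP^j_w}$ (with $0\log0=0$), where $P^j_w=\mathbb{P}\{W_j=w\}$, $P^j_{yw}=\sum_{z\in\mathcal{X}}\alpha^{(j)}_{yzw}\mathbb{P}\{Z_j=z,W_j=w\}$, $P^j_y=\sum_w P^j_{yw}$. Sender $j$'s cost: $U_j((\alpha^{(i)})_i,\beta)=\xi'(\beta,(\alpha^{(i)})_i)+\varrho\zeta'_j(\alpha^{(j)})$; receiver's cost: $V((\alpha^{(i)})_i,\beta)=\xi'(\beta,(\alpha^{(i)})_i)$. *)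

theory Defs
  imports "HOL-Probability.Probability_Mass_Function"
begin

text \<open>Senders are indexed by 1..n; the receiver corresponds to the draw j = 0.
  Sender strategies alpha i y z w, receiver strategy beta xhat ys, where ys is a
  function on {1..n} (extensional, element of PiE).  Alphabets W_i, Y_i are carrier
  sets Ws i, Ys i; the source alphabet X is the finite type 'x.\<close>

definition inA :: "'y set \<Rightarrow> 'w set \<Rightarrow> ('y \<Rightarrow> 'x \<Rightarrow> 'w \<Rightarrow> real) \<Rightarrow> bool" where
  "inA Y W a \<longleftrightarrow>
     (\<forall>z w. w \<in> W \<longrightarrow> (\<forall>y\<in>Y. 0 \<le> a y z w \<and> a y z w \<le> 1) \<and> (\<Sum>y\<in>Y. a y z w) = 1)"

definition inB :: "nat \<Rightarrow> (nat \<Rightarrow> 'y set) \<Rightarrow> ('x::finite \<Rightarrow> (nat \<Rightarrow> 'y) \<Rightarrow> real) \<Rightarrow> bool" where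
  "inB n Ys b \<longleftrightarrow>
     (\<forall>ys \<in> PiE {1..n} Ys. (\<forall>x. 0 \<le> b x ys \<and> b x ys \<le> 1) \<and> (\<Sum>x\<in>UNIV. b x ys) = 1)"

definition xi :: "nat \<Rightarrow> (nat \<Rightarrow> 'y set) \<Rightarrow> (nat \<Rightarrow> 'w set) \<Rightarrow> ('x::finite \<Rightarrow> 'x \<Rightarrow> real)
   \<Rightarrow> ('x \<Rightarrow> (nat \<Rightarrow> 'x) \<Rightarrow> (nat \<Rightarrow> 'w) \<Rightarrow> real)
   \<Rightarrow> ('x \<Rightarrow> (nat \<Rightarrow> 'y) \<Rightarrow> real) \<Rightarrow> (nat \<Rightarrow> 'y \<Rightarrow> 'x \<Rightarrow> 'w \<Rightarrow> real) \<Rightarrow> real" where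
  "xi n Ys Ws d p beta alpha =
     (\<Sum>ys\<in>PiE {1..n} Ys. \<Sum>zs\<in>PiE {1..n} (\<lambda>_. UNIV). \<Sum>ws\<in>PiE {1..n} Ws. \<Sum>xh\<in>UNIV. \<Sum>x\<in>UNIV.
        d x xh * beta xh ys * (\<Prod>i\<in>{1..n}. alpha i (ys i) (zs i) (ws i)) * p x zs ws)"

definition PW :: "nat \<Rightarrow> (nat \<Rightarrow> 'w set) \<Rightarrow> ('x::finite \<Rightarrow> (nat \<Rightarrow> 'x) \<Rightarrow> (nat \<Rightarrow> 'w) \<Rightarrow> real)
   \<Rightarrow> nat \<Rightarrow> 'w \<Rightarrow> real" where
  "PW n Ws p j w =
     (\<Sum>x\<in>UNIV. \<Sum>zs\<in>PiE {1..n} (\<lambda>_. UNIV). \<Sum>ws\<in>{ws \<in> PiE {1..n} Ws. ws j = w}. p x zs ws)"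

definition PZW :: "nat \<Rightarrow> (nat \<Rightarrow> 'w set) \<Rightarrow> ('x::finite \<Rightarrow> (nat \<Rightarrow> 'x) \<Rightarrow> (nat \<Rightarrow> 'w) \<Rightarrow> real)
   \<Rightarrow> nat \<Rightarrow> 'x \<Rightarrow> 'w \<Rightarrow> real" where
  "PZW n Ws p j z w =
     (\<Sum>x\<in>UNIV. \<Sum>zs\<in>{zs \<in> PiE {1..n} (\<lambda>_. UNIV). zs j = z}. \<Sum>ws\<in>{ws \<in> PiE {1..n} Ws. ws j = w}.
        p x zs ws)"

text \<open>Mutual information I(Y_j; W_j) (natural logarithm, 0 log 0 = 0).\<close>
definition zeta :: "nat \<Rightarrow> (nat \<Rightarrow> 'y set) \<Rightarrow> (nat \<Rightarrow> 'w set)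
   \<Rightarrow> ('x::finite \<Rightarrow> (nat \<Rightarrow> 'x) \<Rightarrow> (nat \<Rightarrow> 'w) \<Rightarrow> real) \<Rightarrow> nat \<Rightarrow> ('y \<Rightarrow> 'x \<Rightarrow> 'w \<Rightarrow> real) \<Rightarrow> real" where
  "zeta n Ys Ws p j a =
     (let Pyw = (\<lambda>y w. \<Sum>z\<in>UNIV. a y z w * PZW n Ws p j z w);
          Py = (\<lambda>y. \<Sum>w\<in>Ws j. Pyw y w)
      in \<Sum>y\<in>Ys j. \<Sum>w\<in>Ws j.
           (if Pyw y w = 0 then 0 else Pyw y w * ln (Pyw y w / (Py y * PW n Ws p j w))))"

definition U :: "nat \<Rightarrow> (nat \<Rightarrow> 'y set) \<Rightarrow> (nat \<Rightarrow> 'w set) \<Rightarrow> ('x::finite \<Rightarrow> 'x \<Rightarrow> real)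
   \<Rightarrow> ('x \<Rightarrow> (nat \<Rightarrow> 'x) \<Rightarrow> (nat \<Rightarrow> 'w) \<Rightarrow> real) \<Rightarrow> real \<Rightarrow> nat
   \<Rightarrow> (nat \<Rightarrow> 'y \<Rightarrow> 'x \<Rightarrow> 'w \<Rightarrow> real) \<Rightarrow> ('x \<Rightarrow> (nat \<Rightarrow> 'y) \<Rightarrow> real) \<Rightarrow> real" where
  "U n Ys Ws d p rho j alpha beta = xi n Ys Ws d p beta alpha + rho * zeta n Ys Ws p j (alpha j)"

definition V :: "nat \<Rightarrow> (nat \<Rightarrow> 'y set) \<Rightarrow> (nat \<Rightarrow> 'w set) \<Rightarrow> ('x::finite \<Rightarrow> 'x \<Rightarrow> real)
   \<Rightarrow> ('x \<Rightarrow> (nat \<Rightarrow> 'x) \<Rightarrow> (nat \<Rightarrow> 'w) \<Rightarrow> real)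
   \<Rightarrow> (nat \<Rightarrow> 'y \<Rightarrow> 'x \<Rightarrow> 'w \<Rightarrow> real) \<Rightarrow> ('x \<Rightarrow> (nat \<Rightarrow> 'y) \<Rightarrow> real) \<Rightarrow> real" where
  "V n Ys Ws d p alpha beta = xi n Ys Ws d p beta alpha"

definition Neps :: "nat \<Rightarrow> (nat \<Rightarrow> 'y set) \<Rightarrow> (nat \<Rightarrow> 'w set) \<Rightarrow> ('x::finite \<Rightarrow> 'x \<Rightarrow> real)
   \<Rightarrow> ('x \<Rightarrow> (nat \<Rightarrow> 'x) \<Rightarrow> (nat \<Rightarrow> 'w) \<Rightarrow> real) \<Rightarrow> real \<Rightarrow> real
   \<Rightarrow> ((nat \<Rightarrow> 'y \<Rightarrow> 'x \<Rightarrow> 'w \<Rightarrow> real) \<times> ('x \<Rightarrow> (nat \<Rightarrow> 'y) \<Rightarrow> real)) set" where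
  "Neps n Ys Ws d p rho eps =
     {(alpha, beta). (\<forall>i\<in>{1..n}. inA (Ys i) (Ws i) (alpha i)) \<and> inB n Ys beta \<and>
        (\<forall>j\<in>{1..n}. \<forall>ab. inA (Ys j) (Ws j) ab \<longrightarrow>
            U n Ys Ws d p rho j alpha beta \<le> U n Ys Ws d p rho j (alpha(j := ab)) beta + eps) \<and>
        (\<forall>bb. inB n Ys bb \<longrightarrow> V n Ys Ws d p alpha beta \<le> V n Ys Ws d p alpha bb + eps)}"

text \<open>State after a history of draws; the history list has the MOST RECENT draw at its head.
  selR h alpha: receiver's chosen best response given past history h and current alphas;
  selS h j alpha beta: sender j's chosen best response.\<close>
primrec traj :: "(nat list \<Rightarrow> (nat \<Rightarrow> 's) \<Rightarrow> 'b) \<Rightarrow> (nat list \<Rightarrow> nat \<Rightarrow> (nat \<Rightarrow> 's) \<Rightarrow> 'b \<Rightarrow> 's)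
    \<Rightarrow> ((nat \<Rightarrow> 's) \<times> 'b) \<Rightarrow> nat list \<Rightarrow> ((nat \<Rightarrow> 's) \<times> 'b)" where
  "traj selR selS s0 [] = s0"
| "traj selR selS s0 (j # h) =
     (let s = traj selR selS s0 h in
      if j = 0 then (fst s, selR h (fst s))
      else ((fst s)(j := selS h j (fst s) (snd s)), snd s))"

end

theory Submission
  imports Defs
begin

(*
  The game is an exact potential game: with Phi = E d(X, X^) + rho * sum_j I(Y_j; W_j), a unilateral
  change of strategy by any player changes Phi by exactly the change of that player's cost.
  Hence best responses never increase Phi, and outside N'_eps some player, drawn with probability
  1/(n+1), lowers it by at least eps. Since Phi is bounded below on strategy profiles (mutual
  information over finite alphabets is bounded), the probabilities of being outside N'_eps are
  summable over k and in particular tend to 0.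
*)

lemma sum_lists_length_Suc:
  fixes F :: "'a list \<Rightarrow> real"
  shows "(\<Sum>h\<in>{h. length h = Suc k \<and> set h \<subseteq> A}. F h) =
         (\<Sum>j\<in>A. \<Sum>h\<in>{h. length h = k \<and> set h \<subseteq> A}. F (j # h))"
proof -
  have eq: "{h. length h = Suc k \<and> set h \<subseteq> A} =
      (\<lambda>(j, h). j # h) ` (A \<times> {h. length h = k \<and> set h \<subseteq> A})"
  proof (rule set_eqI, rule iffI)
    fix x assume "x \<in> {h. length h = Suc k \<and> set h \<subseteq> A}"
    then show "x \<in> (\<lambda>(j, h). j # h) ` (A \<times> {h. length h = k \<and> set h \<subseteq> A})"
      by (cases x) (auto intro!: image_eqI[where x="(hd x, tl x)"])
  qed auto
  have inj: "inj_on (\<lambda>(j, h). j # h) (A \<times> {h. length h = k \<and> set h \<subseteq> A})"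
    by (auto simp: inj_on_def)
  show ?thesis
    unfolding eq sum.reindex[OF inj] by (simp add: sum.cartesian_product split_def)
qed

lemma sum_lists_length_Suc_le_if_descent:
  fixes f :: "'a list \<Rightarrow> real" and eps :: real
  assumes "finite A"
    and mono: "\<And>h j. set h \<subseteq> A \<Longrightarrow> j \<in> A \<Longrightarrow> f (j # h) \<le> f h"
    and descent: "\<And>h. set h \<subseteq> A \<Longrightarrow> \<not> g h \<Longrightarrow> \<exists>j\<in>A. f (j # h) \<le> f h - eps"
  defines "L \<equiv> \<lambda>k. {h. length h = k \<and> set h \<subseteq> A}"
  shows "(\<Sum>h\<in>L (Suc k). f h) \<le> card A * (\<Sum>h\<in>L k. f h) - eps * card {h \<in> L k. \<not> g h}"
proof -
  have per_history: "(\<Sum>j\<in>A. f (j # h)) \<le> card A * f h - eps * (if g h then 0 else 1)"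
    if "h \<in> L k" for h
  proof -
    have hA: "set h \<subseteq> A" using that by (simp add: L_def)
    show ?thesis
    proof (cases "g h")
      case True
      have "(\<Sum>j\<in>A. f (j # h)) \<le> (\<Sum>j\<in>A. f h)"
        by (rule sum_mono) (use mono hA in auto)
      then show ?thesis using True by simp
    next
      case False
      then obtain j0 where j0: "j0 \<in> A" "f (j0 # h) \<le> f h - eps"
        using descent hA by blast
      have "(\<Sum>j\<in>A. f (j # h)) \<le> (\<Sum>j\<in>A. f h - (if j = j0 then eps else 0))"
        by (rule sum_mono) (use mono hA j0 in auto)
      also have "\<dots> = card A * f h - eps"
        using \<open>finite A\<close> j0(1) by (simp add: sum_subtractf)
      finally show ?thesis using False by simp
    qed
  qed
  have finL: "finite (L k)"
    using finite_lists_length_eq[OF \<open>finite A\<close>, of k] by (simp add: L_def conj_commute)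
  have "(\<Sum>h\<in>L (Suc k). f h) = (\<Sum>h\<in>L k. \<Sum>j\<in>A. f (j # h))"
    unfolding L_def sum_lists_length_Suc by (rule sum.swap)
  also have "\<dots> \<le> (\<Sum>h\<in>L k. card A * f h - eps * (if g h then 0 else 1))"
    by (intro sum_mono per_history)
  also have "\<dots> = card A * (\<Sum>h\<in>L k. f h) - eps * (\<Sum>h\<in>L k. if g h then 0 else 1)"
    by (simp add: sum_subtractf sum_distrib_left)
  also have "(\<Sum>h\<in>L k. if g h then 0 else 1) = real (card {h \<in> L k. \<not> g h})"
    using finL by (simp add: sum.If_cases Int_def)
  finally show ?thesis .
qed

lemma summable_if_decrement_bounded_below:
  fixes a b :: "nat \<Rightarrow> real"
  assumes step: "\<And>k. a (Suc k) \<le> a k - b k"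
    and nonneg: "\<And>k. 0 \<le> b k"
    and lower: "\<And>k. m \<le> a k"
  shows "summable b"
proof (rule summableI_nonneg_bounded)
  have telescope: "(\<Sum>i<k. b i) \<le> a 0 - a k" for k
  proof (induction k)
    case (Suc k)
    then show ?case using step[of k] by simp
  qed simp
  show "(\<Sum>i<k. b i) \<le> a 0 - m" for k
    using telescope[of k] lower[of k] by linarith
qed (rule nonneg)

lemma prob_tendsto_1_if_descent:
  fixes f :: "'a list \<Rightarrow> real" and eps :: real
  assumes "finite A" "A \<noteq> {}" "eps > 0"
    and lower: "\<And>h. set h \<subseteq> A \<Longrightarrow> m \<le> f h"
    and mono: "\<And>h j. set h \<subseteq> A \<Longrightarrow> j \<in> A \<Longrightarrow> f (j # h) \<le> f h"
    and descent: "\<And>h. set h \<subseteq> A \<Longrightarrow> \<not> g h \<Longrightarrow> \<exists>j\<in>A. f (j # h) \<le> f h - eps"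
  shows "(\<lambda>k. measure_pmf.prob (pmf_of_set {h. length h = k \<and> set h \<subseteq> A}) {h. g h}) \<longlonglongrightarrow> 1"
proof -
  define L where "L k = {h. length h = k \<and> set h \<subseteq> A}" for k
  define c where "c = real (card A)"
  have "c > 0" using assms(1,2) by (simp add: c_def card_gt_0_iff)
  have finL: "finite (L k)" for k
    using finite_lists_length_eq[OF \<open>finite A\<close>, of k] by (simp add: L_def conj_commute)
  have cardL: "real (card (L k)) = c ^ k" for k
    using card_lists_length_eq[OF \<open>finite A\<close>, of k] by (simp add: L_def conj_commute c_def)
  define bad where "bad k = real (card {h \<in> L k. \<not> g h}) / c ^ k" for k
  define avg where "avg k = (\<Sum>h\<in>L k. f h) / c ^ k" for k
  have "summable bad"
  proof (rule summable_if_decrement_bounded_below[where a="\<lambda>k. c / eps * avg k"])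
    show "c / eps * avg (Suc k) \<le> c / eps * avg k - bad k" for k
      using sum_lists_length_Suc_le_if_descent[OF \<open>finite A\<close> mono descent, where k=k]
        \<open>c > 0\<close> \<open>eps > 0\<close>
      by (simp add: avg_def bad_def L_def c_def divide_simps) (simp add: algebra_simps)
    show "0 \<le> bad k" for k using \<open>c > 0\<close> by (simp add: bad_def)
    have "m * c ^ k \<le> (\<Sum>h\<in>L k. f h)" for k
      using sum_mono[of "L k" "\<lambda>_. m" f] lower cardL[of k] by (simp add: L_def mult.commute)
    then show "c / eps * m \<le> c / eps * avg k" for k
      using \<open>c > 0\<close> \<open>eps > 0\<close> by (simp add: avg_def field_simps)
  qed
  then have "(\<lambda>k. 1 - bad k) \<longlonglongrightarrow> 1 - 0"
    by (intro tendsto_intros summable_LIMSEQ_zero)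
  moreover have "measure_pmf.prob (pmf_of_set (L k)) {h. g h} = 1 - bad k" for k
  proof -
    have "L k \<noteq> {}" using cardL[of k] \<open>c > 0\<close> by auto
    moreover have "card (L k \<inter> {h. g h}) + card {h \<in> L k. \<not> g h} = card (L k)"
      using finL[of k] by (subst card_Un_disjoint[symmetric]) (auto intro: arg_cong[where f=card])
    ultimately show ?thesis
      using measure_pmf_of_set[OF _ finL, of k "{h. g h}"] cardL[of k] \<open>c > 0\<close>
      by (simp add: bad_def field_simps flip: of_nat_add)
  qed
  ultimately show ?thesis by (simp add: L_def)
qed

lemma abs_mul_ln_div_le:
  fixes P Q K R :: real
  assumes "0 < P" "P \<le> Q" "Q \<le> K" "0 < R"
  shows "\<bar>P * ln (P / (Q * R))\<bar> \<le> K * R + K / R"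
proof -
  define u where "u = P / (Q * R)"
  have "0 < Q" "0 < u" using assms by (auto simp: u_def)
  have "P * ln u \<le> P * (u - 1)"
    using ln_le_minus_one[OF \<open>0 < u\<close>] assms(1) by (simp add: mult_left_mono)
  also have "\<dots> \<le> (P / Q) * (P / R)" using assms(1) by (simp add: u_def algebra_simps)
  also have "\<dots> \<le> 1 * (K / R)"
    using assms \<open>0 < Q\<close> by (intro mult_mono) (auto simp: divide_right_mono)
  finally have upper: "P * ln u \<le> K / R" by simp
  have "ln (1 / u) \<le> 1 / u - 1" using ln_le_minus_one \<open>0 < u\<close> by simp
  then have "P * (1 - 1 / u) \<le> P * ln u"
    using assms(1) \<open>0 < u\<close> by (intro mult_left_mono) (auto simp: ln_div)
  moreover have "P * (1 - 1 / u) = P - Q * R" using assms \<open>0 < Q\<close> by (simp add: u_def field_simps)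
  moreover have "Q * R \<le> K * R" using assms by simp
  ultimately have lower: "- (K * R) \<le> P * ln u" using assms(1) by linarith
  have "0 \<le> K * R" "0 \<le> K / R" using assms by auto
  with upper lower show ?thesis unfolding u_def abs_le_iff by linarith
qed

text \<open>With the conventions \<open>x / 0 = 0\<close> and \<open>ln 0 = 0\<close> the bound also covers \<open>R = 0\<close>.\<close>

lemma abs_mutual_information_summand_le:
  fixes P Q K R :: real
  assumes "0 \<le> P" "P \<le> Q" "Q \<le> K" "0 \<le> R"
  shows "\<bar>if P = 0 then 0 else P * ln (P / (Q * R))\<bar> \<le> K * R + K / R"
proof (cases "P = 0 \<or> R = 0")
  case True
  then show ?thesis using assms by auto
next
  case False
  then show ?thesis using abs_mul_ln_div_le[of P Q K R] assms by auto
qed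

locale privacy_game =
  fixes n :: nat and Ys :: "nat \<Rightarrow> 'y set" and Ws :: "nat \<Rightarrow> 'w set"
    and d :: "'x::finite \<Rightarrow> 'x \<Rightarrow> real"
    and p :: "'x \<Rightarrow> (nat \<Rightarrow> 'x) \<Rightarrow> (nat \<Rightarrow> 'w) \<Rightarrow> real"
    and rho :: real
  assumes finite_Ws: "\<And>i. i \<in> {1..n} \<Longrightarrow> finite (Ws i)"
    and d_nonneg: "\<And>x xh. 0 \<le> d x xh"
    and p_nonneg: "\<And>x zs ws. zs \<in> PiE {1..n} (\<lambda>_. UNIV) \<Longrightarrow> ws \<in> PiE {1..n} Ws \<Longrightarrow> 0 \<le> p x zs ws"
begin

definition senders_feasible :: "(nat \<Rightarrow> 'y \<Rightarrow> 'x \<Rightarrow> 'w \<Rightarrow> real) \<Rightarrow> bool" where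
  "senders_feasible alpha \<longleftrightarrow> (\<forall>i\<in>{1..n}. inA (Ys i) (Ws i) (alpha i))"

definition potential :: "(nat \<Rightarrow> 'y \<Rightarrow> 'x \<Rightarrow> 'w \<Rightarrow> real) \<times> ('x \<Rightarrow> (nat \<Rightarrow> 'y) \<Rightarrow> real) \<Rightarrow> real" where
  "potential s = xi n Ys Ws d p (snd s) (fst s) + rho * (\<Sum>i\<in>{1..n}. zeta n Ys Ws p i (fst s i))"

lemma potential_sender_update:
  assumes "j \<in> {1..n}"
  shows "potential (alpha(j := a), beta) - potential (alpha, beta) =
    U n Ys Ws d p rho j (alpha(j := a)) beta - U n Ys Ws d p rho j alpha beta"
proof -
  have "(\<Sum>i\<in>{1..n}. zeta n Ys Ws p i (alpha' i)) =
      zeta n Ys Ws p j (alpha' j) + (\<Sum>i\<in>{1..n} - {j}. zeta n Ys Ws p i (alpha' i))" for alpha'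
    using assms by (simp add: sum.remove)
  moreover have "(\<Sum>i\<in>{1..n} - {j}. zeta n Ys Ws p i ((alpha(j := a)) i)) =
      (\<Sum>i\<in>{1..n} - {j}. zeta n Ys Ws p i (alpha i))"
    by (intro sum.cong) auto
  ultimately show ?thesis by (simp add: potential_def U_def algebra_simps)
qed

lemma potential_receiver_update:
  "potential (alpha, b) - potential (alpha, beta) = V n Ys Ws d p alpha b - V n Ys Ws d p alpha beta"
  by (simp add: potential_def V_def)

lemma xi_nonneg:
  assumes "senders_feasible alpha" "inB n Ys beta"
  shows "0 \<le> xi n Ys Ws d p beta alpha"
  unfolding xi_def
proof (intro sum_nonneg mult_nonneg_nonneg prod_nonneg)
  fix ys ws x xh and zs :: "nat \<Rightarrow> 'x"
  assume ys: "ys \<in> PiE {1..n} Ys" and zs: "zs \<in> PiE {1..n} (\<lambda>_. UNIV)" and ws: "ws \<in> PiE {1..n} Ws"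
  show "0 \<le> d x xh" by (rule d_nonneg)
  show "0 \<le> beta xh ys" using assms(2) ys by (auto simp: inB_def)
  show "0 \<le> p x zs ws" using zs ws by (rule p_nonneg)
  fix i assume i: "i \<in> {1..n}"
  then have "ys i \<in> Ys i" "ws i \<in> Ws i" using ys ws by (auto simp: PiE_def Pi_def)
  then show "0 \<le> alpha i (ys i) (zs i) (ws i)"
    using assms(1) i by (auto simp: senders_feasible_def inA_def)
qed

lemma zeta_bounded:
  assumes "j \<in> {1..n}"
  shows "\<exists>C. \<forall>a. inA (Ys j) (Ws j) a \<longrightarrow> \<bar>zeta n Ys Ws p j a\<bar> \<le> C"
proof -
  define K where "K = (\<Sum>w\<in>Ws j. \<Sum>z\<in>UNIV. PZW n Ws p j z w)"
  define R where "R w = PW n Ws p j w" for w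
  have PZW_nonneg: "0 \<le> PZW n Ws p j z w" for z w
    unfolding PZW_def by (intro sum_nonneg p_nonneg) auto
  have R_nonneg: "0 \<le> R w" for w
    unfolding R_def PW_def by (intro sum_nonneg p_nonneg) auto
  have "\<bar>zeta n Ys Ws p j a\<bar> \<le> (\<Sum>y\<in>Ys j. \<Sum>w\<in>Ws j. K * R w + K / R w)"
    if a: "inA (Ys j) (Ws j) a" for a
  proof -
    define Pyw where "Pyw y w = (\<Sum>z\<in>UNIV. a y z w * PZW n Ws p j z w)" for y w
    define Py where "Py y = (\<Sum>w\<in>Ws j. Pyw y w)" for y
    have a01: "0 \<le> a y z w" "a y z w \<le> 1" if "y \<in> Ys j" "w \<in> Ws j" for y z w
      using a that by (auto simp: inA_def)
    have Pyw_nonneg: "0 \<le> Pyw y w" if "y \<in> Ys j" "w \<in> Ws j" for y w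
      unfolding Pyw_def using a01[OF that] PZW_nonneg by (intro sum_nonneg) auto
    have Pyw_le: "Pyw y w \<le> (\<Sum>z\<in>UNIV. PZW n Ws p j z w)" if "y \<in> Ys j" "w \<in> Ws j" for y w
      unfolding Pyw_def using a01[OF that] PZW_nonneg by (intro sum_mono) (simp add: mult_left_le_one_le)
    have Pyw_le_Py: "Pyw y w \<le> Py y" if "y \<in> Ys j" "w \<in> Ws j" for y w
      unfolding Py_def using finite_Ws[OF assms] that Pyw_nonneg by (intro member_le_sum) auto
    have Py_le_K: "Py y \<le> K" if "y \<in> Ys j" for y
      unfolding Py_def K_def using Pyw_le that by (intro sum_mono) auto
    have "\<bar>zeta n Ys Ws p j a\<bar> \<le> (\<Sum>y\<in>Ys j. \<Sum>w\<in>Ws j.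
        \<bar>if Pyw y w = 0 then 0 else Pyw y w * ln (Pyw y w / (Py y * R w))\<bar>)"
      unfolding zeta_def Let_def Pyw_def[symmetric] Py_def[symmetric] R_def[symmetric]
      by (rule order_trans[OF sum_abs sum_mono[OF sum_abs]])
    also have "\<dots> \<le> (\<Sum>y\<in>Ys j. \<Sum>w\<in>Ws j. K * R w + K / R w)"
      using Pyw_nonneg Pyw_le_Py Py_le_K R_nonneg
      by (intro sum_mono abs_mutual_information_summand_le) auto
    finally show ?thesis .
  qed
  then show ?thesis by blast
qed

lemma potential_bounded_below:
  "\<exists>m. \<forall>alpha beta. senders_feasible alpha \<and> inB n Ys beta \<longrightarrow> m \<le> potential (alpha, beta)"
proof -
  have "\<forall>i\<in>{1..n}. \<exists>C. \<forall>a. inA (Ys i) (Ws i) a \<longrightarrow> \<bar>zeta n Ys Ws p i a\<bar> \<le> C"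
    using zeta_bounded by blast
  then have "\<exists>C. \<forall>i\<in>{1..n}. \<forall>a. inA (Ys i) (Ws i) a \<longrightarrow> \<bar>zeta n Ys Ws p i a\<bar> \<le> C i"
    by (rule bchoice)
  then obtain C where C: "\<And>i a. i \<in> {1..n} \<Longrightarrow> inA (Ys i) (Ws i) a \<Longrightarrow> \<bar>zeta n Ys Ws p i a\<bar> \<le> C i"
    by blast
  have "- (\<bar>rho\<bar> * (\<Sum>i\<in>{1..n}. C i)) \<le> potential (alpha, beta)"
    if "senders_feasible alpha" "inB n Ys beta" for alpha beta
  proof -
    have "\<bar>\<Sum>i\<in>{1..n}. zeta n Ys Ws p i (alpha i)\<bar> \<le> (\<Sum>i\<in>{1..n}. C i)"
      using that(1) by (intro order_trans[OF sum_abs] sum_mono C) (auto simp: senders_feasible_def)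
    then have "\<bar>rho * (\<Sum>i\<in>{1..n}. zeta n Ys Ws p i (alpha i))\<bar> \<le> \<bar>rho\<bar> * (\<Sum>i\<in>{1..n}. C i)"
      by (simp add: abs_mult mult_left_mono)
    then show ?thesis
      using xi_nonneg[OF that] by (simp add: potential_def abs_le_iff)
  qed
  then show ?thesis by blast
qed

end

locale best_response_dynamics = privacy_game n Ys Ws d p rho
  for n :: nat and Ys :: "nat \<Rightarrow> 'y set" and Ws :: "nat \<Rightarrow> 'w set"
    and d :: "'x::finite \<Rightarrow> 'x \<Rightarrow> real"
    and p :: "'x \<Rightarrow> (nat \<Rightarrow> 'x) \<Rightarrow> (nat \<Rightarrow> 'w) \<Rightarrow> real"
    and rho :: real +
  fixes alpha0 :: "nat \<Rightarrow> 'y \<Rightarrow> 'x \<Rightarrow> 'w \<Rightarrow> real"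
    and beta0 :: "'x \<Rightarrow> (nat \<Rightarrow> 'y) \<Rightarrow> real"
    and selR :: "nat list \<Rightarrow> (nat \<Rightarrow> 'y \<Rightarrow> 'x \<Rightarrow> 'w \<Rightarrow> real) \<Rightarrow> ('x \<Rightarrow> (nat \<Rightarrow> 'y) \<Rightarrow> real)"
    and selS :: "nat list \<Rightarrow> nat \<Rightarrow> (nat \<Rightarrow> 'y \<Rightarrow> 'x \<Rightarrow> 'w \<Rightarrow> real) \<Rightarrow> ('x \<Rightarrow> (nat \<Rightarrow> 'y) \<Rightarrow> real)
                 \<Rightarrow> ('y \<Rightarrow> 'x \<Rightarrow> 'w \<Rightarrow> real)"
  assumes alpha0_feasible: "senders_feasible alpha0"
    and beta0_feasible: "inB n Ys beta0"
    and selR_feasible: "senders_feasible alpha \<Longrightarrow> inB n Ys (selR h alpha)"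
    and selR_optimal: "senders_feasible alpha \<Longrightarrow> inB n Ys b \<Longrightarrow>
      V n Ys Ws d p alpha (selR h alpha) \<le> V n Ys Ws d p alpha b"
    and selS_feasible: "j \<in> {1..n} \<Longrightarrow> senders_feasible alpha \<Longrightarrow> inB n Ys beta \<Longrightarrow>
      inA (Ys j) (Ws j) (selS h j alpha beta)"
    and selS_optimal: "j \<in> {1..n} \<Longrightarrow> senders_feasible alpha \<Longrightarrow> inB n Ys beta \<Longrightarrow>
      inA (Ys j) (Ws j) a \<Longrightarrow>
      U n Ys Ws d p rho j (alpha(j := selS h j alpha beta)) beta \<le> U n Ys Ws d p rho j (alpha(j := a)) beta"
begin

abbreviation state :: "nat list \<Rightarrow> (nat \<Rightarrow> 'y \<Rightarrow> 'x \<Rightarrow> 'w \<Rightarrow> real) \<times> ('x \<Rightarrow> (nat \<Rightarrow> 'y) \<Rightarrow> real)" where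
  "state \<equiv> traj selR selS (alpha0, beta0)"

lemma state_feasible:
  assumes "set h \<subseteq> {0..n}"
  shows "senders_feasible (fst (state h)) \<and> inB n Ys (snd (state h))"
  using assms
proof (induction h)
  case Nil
  then show ?case using alpha0_feasible beta0_feasible by simp
next
  case (Cons j h)
  then have IH: "senders_feasible (fst (state h))" "inB n Ys (snd (state h))" by auto
  show ?case
  proof (cases "j = 0")
    case True
    then show ?thesis using IH selR_feasible by (simp add: Let_def)
  next
    case False
    with Cons.prems have "j \<in> {1..n}" by auto
    then show ?thesis
      using False IH selS_feasible by (auto simp: Let_def senders_feasible_def)
  qed
qed

lemma potential_receiver_move:
  assumes "set h \<subseteq> {0..n}" "inB n Ys b" "state h = (alpha, beta)"
  shows "potential (state (0 # h)) \<le>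
    potential (state h) - (V n Ys Ws d p alpha beta - V n Ys Ws d p alpha b)"
proof -
  have "V n Ys Ws d p alpha (selR h alpha) \<le> V n Ys Ws d p alpha b"
    using selR_optimal state_feasible[OF assms(1)] assms(2,3) by simp
  then show ?thesis
    using potential_receiver_update[of alpha "selR h alpha" beta] assms(3) by (simp add: Let_def)
qed

lemma potential_sender_move:
  assumes "set h \<subseteq> {0..n}" "j \<in> {1..n}" "inA (Ys j) (Ws j) a" "state h = (alpha, beta)"
  shows "potential (state (j # h)) \<le>
    potential (state h) - (U n Ys Ws d p rho j alpha beta - U n Ys Ws d p rho j (alpha(j := a)) beta)"
proof -
  have "U n Ys Ws d p rho j (alpha(j := selS h j alpha beta)) beta \<le> U n Ys Ws d p rho j (alpha(j := a)) beta"
    using selS_optimal state_feasible[OF assms(1)] assms(2-4) by simp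
  moreover have "j \<noteq> 0" using assms(2) by simp
  ultimately show ?thesis
    using potential_sender_update[OF assms(2), of alpha "selS h j alpha beta" beta] assms(4)
    by (simp add: Let_def)
qed

lemma potential_state_Cons_le:
  assumes "set h \<subseteq> {0..n}" "j \<in> {0..n}"
  shows "potential (state (j # h)) \<le> potential (state h)"
proof -
  obtain alpha beta where s: "state h = (alpha, beta)" by fastforce
  show ?thesis
  proof (cases "j = 0")
    case True
    have "inB n Ys beta" using state_feasible[OF assms(1)] s by simp
    from potential_receiver_move[OF assms(1) this s] show ?thesis using True by simp
  next
    case False
    with assms(2) have "j \<in> {1..n}" by simp
    moreover have "inA (Ys j) (Ws j) (alpha j)"
      using state_feasible[OF assms(1)] s \<open>j \<in> {1..n}\<close> by (simp add: senders_feasible_def)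
    ultimately show ?thesis using potential_sender_move[OF assms(1), of j "alpha j"] s by simp
  qed
qed

lemma potential_state_Cons_descent:
  assumes "set h \<subseteq> {0..n}" "state h \<notin> Neps n Ys Ws d p rho eps"
  shows "\<exists>j\<in>{0..n}. potential (state (j # h)) \<le> potential (state h) - eps"
proof -
  obtain alpha beta where s: "state h = (alpha, beta)" by fastforce
  then have "(\<exists>j\<in>{1..n}. \<exists>a. inA (Ys j) (Ws j) a \<and>
        U n Ys Ws d p rho j (alpha(j := a)) beta + eps < U n Ys Ws d p rho j alpha beta) \<or>
      (\<exists>b. inB n Ys b \<and> V n Ys Ws d p alpha b + eps < V n Ys Ws d p alpha beta)"
    using assms state_feasible[OF assms(1)] by (auto simp: Neps_def senders_feasible_def not_le)
  then show ?thesis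
  proof (elim disjE bexE exE conjE)
    fix j a
    assume "j \<in> {1..n}" "inA (Ys j) (Ws j) a"
      "U n Ys Ws d p rho j (alpha(j := a)) beta + eps < U n Ys Ws d p rho j alpha beta"
    then show ?thesis using potential_sender_move[OF assms(1) _ _ s, of j a] by force
  next
    fix b
    assume "inB n Ys b" "V n Ys Ws d p alpha b + eps < V n Ys Ws d p alpha beta"
    then show ?thesis using potential_receiver_move[OF assms(1) _ s, of b] by force
  qed
qed

lemma prob_state_in_Neps_tendsto_1:
  assumes "eps > 0"
  shows "(\<lambda>k. measure_pmf.prob (pmf_of_set {h. length h = k \<and> set h \<subseteq> {0..n}})
            {h. state h \<in> Neps n Ys Ws d p rho eps}) \<longlonglongrightarrow> 1"
proof -
  obtain m where m: "\<And>alpha beta. senders_feasible alpha \<Longrightarrow> inB n Ys beta \<Longrightarrow> m \<le> potential (alpha, beta)"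
    using potential_bounded_below by blast
  have "m \<le> potential (state h)" if "set h \<subseteq> {0..n}" for h
    using m state_feasible[OF that] by (metis prod.collapse)
  then show ?thesis
    by (intro prob_tendsto_1_if_descent[where f="\<lambda>h. potential (state h)"])
       (use assms potential_state_Cons_le potential_state_Cons_descent in auto)
qed

end

theorem mainTheorem9:
  fixes n :: nat
    and Ys :: "nat \<Rightarrow> 'y set" and Ws :: "nat \<Rightarrow> 'w set"
    and d :: "'x::finite \<Rightarrow> 'x \<Rightarrow> real"
    and p :: "'x \<Rightarrow> (nat \<Rightarrow> 'x) \<Rightarrow> (nat \<Rightarrow> 'w) \<Rightarrow> real"
    and rho :: real
    and alpha0 :: "nat \<Rightarrow> 'y \<Rightarrow> 'x \<Rightarrow> 'w \<Rightarrow> real"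
    and beta0 :: "'x \<Rightarrow> (nat \<Rightarrow> 'y) \<Rightarrow> real"
    and selR :: "nat list \<Rightarrow> (nat \<Rightarrow> 'y \<Rightarrow> 'x \<Rightarrow> 'w \<Rightarrow> real) \<Rightarrow> ('x \<Rightarrow> (nat \<Rightarrow> 'y) \<Rightarrow> real)"
    and selS :: "nat list \<Rightarrow> nat \<Rightarrow> (nat \<Rightarrow> 'y \<Rightarrow> 'x \<Rightarrow> 'w \<Rightarrow> real) \<Rightarrow> ('x \<Rightarrow> (nat \<Rightarrow> 'y) \<Rightarrow> real)
                 \<Rightarrow> ('y \<Rightarrow> 'x \<Rightarrow> 'w \<Rightarrow> real)"
    and eps :: real
  assumes n2: "n \<ge> 2"
    and Ws_fin: "\<forall>i\<in>{1..n}. finite (Ws i) \<and> Ws i \<noteq> {}"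
    and Ys_fin: "\<forall>i\<in>{1..n}. finite (Ys i) \<and> Ys i \<noteq> {}"
    and d_nonneg: "\<forall>x xh. d x xh \<ge> 0"
    and p_nonneg: "\<forall>x. \<forall>zs\<in>PiE {1..n} (\<lambda>_. UNIV). \<forall>ws\<in>PiE {1..n} Ws. p x zs ws \<ge> 0"
    and p_sum: "(\<Sum>x\<in>UNIV. \<Sum>zs\<in>PiE {1..n} (\<lambda>_. UNIV). \<Sum>ws\<in>PiE {1..n} Ws. p x zs ws) = 1"
    and alpha0_A: "\<forall>i\<in>{1..n}. inA (Ys i) (Ws i) (alpha0 i)"
    and beta0_B: "inB n Ys beta0"
    and selR_argmin: "\<forall>h alpha. (\<forall>i\<in>{1..n}. inA (Ys i) (Ws i) (alpha i)) \<longrightarrow>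
        inB n Ys (selR h alpha) \<and>
        (\<forall>b. inB n Ys b \<longrightarrow> V n Ys Ws d p alpha (selR h alpha) \<le> V n Ys Ws d p alpha b)"
    and selS_argmin: "\<forall>h j alpha beta. j \<in> {1..n} \<and> (\<forall>i\<in>{1..n}. inA (Ys i) (Ws i) (alpha i)) \<and> inB n Ys beta
        \<longrightarrow> inA (Ys j) (Ws j) (selS h j alpha beta) \<and>
            (\<forall>a. inA (Ys j) (Ws j) a \<longrightarrow>
               U n Ys Ws d p rho j (alpha(j := selS h j alpha beta)) beta
                 \<le> U n Ys Ws d p rho j (alpha(j := a)) beta)"
    and eps_pos: "eps > 0"
  shows "(\<lambda>k. measure_pmf.prob (pmf_of_set {h. length h = k \<and> set h \<subseteq> {0..n}})
            {h. traj selR selS (alpha0, beta0) h \<in> Neps n Ys Ws d p rho eps})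
         \<longlonglongrightarrow> 1"
proof -
  \<comment> \<open>Not needed: \<open>n \<ge> 2\<close>, the nonemptiness of the alphabets, the finiteness of the \<open>Ys i\<close>
    and the normalisation of \<open>p\<close>.\<close>
  interpret privacy_game n Ys Ws d p rho
    by unfold_locales (use Ws_fin d_nonneg p_nonneg in auto)
  interpret best_response_dynamics n Ys Ws d p rho alpha0 beta0 selR selS
    by unfold_locales
      (use alpha0_A beta0_B selR_argmin selS_argmin in \<open>auto simp: senders_feasible_def\<close>)
  show ?thesis using eps_pos by (rule prob_state_in_Neps_tendsto_1)
qed

end
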